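(* Let $\mathcal H_s\cong\mathbb C^d$, $\mathcal H_u\cong\mathbb C^k$, let $\chi\in\mathcal H_u$ be a unit vector and $U$ a unitary on $\mathcal H_s\otimes\mathcal H_u$ such that the transition operator $T(\rho)=\mathrm{Tr}_u\big(U(\rho\otimes|\chi\rangle\langle\chi|)U^*\big)$ is primitive, with stationary state $\rho_{ss}$. Let $\mathcal H_a\cong\mathbb C^d$ be an additional (absorber) system. Then there exist a unit vector $\tilde\psi\in\mathcal H_s\otimes\mathcal H_a$ with $\mathrm{Tr}_a|\tilde\psi\rangle\langle\tilde\psi|=\rho_{ss}$ and a unitary $V$ on $\mathcal H_a\otimes\mathcal H_u$ such that, with $W:=(\mathbf 1_s\otimes V)(U\otimes\mathbf 1_a)$ acting on $\mathcal H_s\otimes\mathcal H_a\otimes\mathcal H_u$ (with the obvious reordering of tensor factors), $$W(\tilde\psi\otimes\chi)=\tilde\psi\otimes\chi .$$ In particular, if the doubled-up system $\mathcal H_s\otimes\mathcal H_a$ starts in $\tilde\psi$ and interacts successively via $W$ with $n$ noise units each prepared in $\chi$, the joint final state is $\tilde\psi\otimes\chi^{\otimes n}$, so the output state of the $n$ noise units equals the input state $\chi^{\otimes n}$.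
   Context: A quantum Markov chain (discrete-time input-output system) consists of a system $\mathcal H_s$ interacting successively via a fixed unitary $U$ on $\mathcal H_s\otimes\mathcal H_u$ with independent noise units, each prepared in state $\chi$. Primitive means $T$ has a unique full-rank stationary state $\rho_{ss}$ ($T(\rho_{ss})=\rho_{ss}$) and $1$ is the only eigenvalue of $T$ on the unit circle. *)

theory Defs
  imports "HOL-Analysis.Analysis"
begin

text \<open>Finite-dimensional Hilbert spaces C^n are modelled as complex ^ 'n for a finite
index type 'n; operators as complex ^ 'n ^ 'n (row index first).  Tensor products
are indexed by product types.\<close>

definition adj :: "complex^'n^'m \<Rightarrow> complex^'m^'n" where
  "adj A = (\<chi> i j. cnj (A $ j $ i))"

definition unitary :: "complex^'n^'n \<Rightarrow> bool" where
  "unitary U \<longleftrightarrow> U ** adj U = mat 1 \<and> adj U ** U = mat 1"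

definition smult_mat :: "complex \<Rightarrow> complex^'n^'m \<Rightarrow> complex^'n^'m" where
  "smult_mat c X = (\<chi> i j. c * X $ i $ j)"

definition mtrace :: "complex^'n^'n \<Rightarrow> complex" where
  "mtrace X = (\<Sum>i\<in>UNIV. X $ i $ i)"

definition psd :: "complex^'n^'n \<Rightarrow> bool" where
  "psd X \<longleftrightarrow> (\<forall>v::complex^'n.
      Im (\<Sum>i\<in>UNIV. cnj (v $ i) * (X *v v) $ i) = 0 \<and>
      0 \<le> Re (\<Sum>i\<in>UNIV. cnj (v $ i) * (X *v v) $ i))"

definition density_op :: "complex^'n^'n \<Rightarrow> bool" where
  "density_op \<rho> \<longleftrightarrow> psd \<rho> \<and> mtrace \<rho> = 1"

definition proj :: "complex^'n \<Rightarrow> complex^'n^'n" where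
  "proj \<psi> = (\<chi> i j. \<psi> $ i * cnj (\<psi> $ j))"

definition kron :: "complex^'a^'a \<Rightarrow> complex^'b^'b \<Rightarrow> complex^('a\<times>'b)^('a\<times>'b)" where
  "kron A B = (\<chi> p q. A $ fst p $ fst q * B $ snd p $ snd q)"

definition vtensor :: "complex^'a \<Rightarrow> complex^'b \<Rightarrow> complex^('a\<times>'b)" where
  "vtensor x y = (\<chi> p. x $ fst p * y $ snd p)"

definition ptrace2 :: "complex^('a::finite\<times>'b::finite)^('a\<times>'b) \<Rightarrow> complex^'a^'a" where
  "ptrace2 X = (\<chi> i j. \<Sum>k\<in>UNIV. X $ (i,k) $ (j,k))"

definition transop :: "complex^('s\<times>'u)^('s\<times>'u) \<Rightarrow> complex^'u \<Rightarrow> complex^'s^'s \<Rightarrow> complex^'s^'s" where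
  "transop U chi \<rho> = ptrace2 (U ** kron \<rho> (proj chi) ** adj U)"

definition primitive :: "(complex^'s^'s \<Rightarrow> complex^'s^'s) \<Rightarrow> bool" where
  "primitive T \<longleftrightarrow>
     (\<exists>!\<rho>. density_op \<rho> \<and> T \<rho> = \<rho>) \<and>
     (\<forall>\<rho>. density_op \<rho> \<and> T \<rho> = \<rho> \<longrightarrow> invertible \<rho>) \<and>
     (\<forall>c X. X \<noteq> 0 \<and> T X = smult_mat c X \<and> cmod c = 1 \<longrightarrow> c = 1)"

text \<open>U (x) 1_a and 1_s (x) V as operators on (H_s (x) H_a) (x) H_u.\<close>
definition U_ext :: "complex^('s::finite\<times>'u::finite)^('s\<times>'u) \<Rightarrow> complex^(('s\<times>'a)\<times>'u)^(('s\<times>'a::finite)\<times>'u)" where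
  "U_ext U = (\<chi> p q. U $ (fst (fst p), snd p) $ (fst (fst q), snd q) * (if snd (fst p) = snd (fst q) then 1 else 0))"

definition V_ext :: "complex^('a::finite\<times>'u::finite)^('a\<times>'u) \<Rightarrow> complex^(('s\<times>'a)\<times>'u)^(('s::finite\<times>'a)\<times>'u)" where
  "V_ext V = (\<chi> p q. (if fst (fst p) = fst (fst q) then 1 else 0) * V $ (snd (fst p), snd p) $ (snd (fst q), snd q))"

end

theory Submission
  imports Defs
begin

text \<open>Factor the stationary state as \<open>\<rho>ss = A A\<^sup>*\<close> and take the purification
  \<open>\<psi> = \<Sum> A\<^sub>i\<^sub>a e\<^sub>i \<otimes> e\<^sub>a\<close>, so that \<open>Tr\<^sub>a |\<psi>\<rangle>\<langle>\<psi>| = \<rho>ss\<close>.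
  Write a vector of \<open>H\<^sub>s \<otimes> H\<^sub>a \<otimes> H\<^sub>u\<close> as \<open>\<Sum>\<^sub>i e\<^sub>i \<otimes> y\<^sub>i\<close> with
  \<open>y\<^sub>i \<in> H\<^sub>a \<otimes> H\<^sub>u\<close>. The Gram matrix of the \<open>y\<^sub>i\<close> is the transpose of
  \<open>T(\<rho>ss)\<close> for \<open>(U \<otimes> 1)(\<psi> \<otimes> \<chi>)\<close> and the transpose of \<open>\<rho>ss\<close> for
  \<open>\<psi> \<otimes> \<chi>\<close>. By stationarity the two families have the same Gram matrix, so a
  unitary \<open>V\<close> on \<open>H\<^sub>a \<otimes> H\<^sub>u\<close> maps one onto the other, and that is the
  fixed-point equation.
  The factorisation of a positive semidefinite matrix is built Cholesky-style, and \<open>V\<close>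
  as a product of Householder-type rank-one unitaries.\<close>

definition cinner :: "complex^'n \<Rightarrow> complex^'n \<Rightarrow> complex" where
  "cinner x y = (\<Sum>i\<in>UNIV. cnj (x $ i) * y $ i)"

lemma cinner_add_left: "cinner (x + y) z = cinner x z + cinner y z"
  by (simp add: cinner_def distrib_right sum.distrib)

lemma cinner_add_right: "cinner x (y + z) = cinner x y + cinner x z"
  by (simp add: cinner_def distrib_left sum.distrib)

lemma cinner_diff_left: "cinner (x - y) z = cinner x z - cinner y z"
  by (simp add: cinner_def left_diff_distrib sum_subtractf)

lemma cinner_diff_right: "cinner x (y - z) = cinner x y - cinner x z"
  by (simp add: cinner_def right_diff_distrib sum_subtractf)

lemma cinner_scale_left: "cinner (c *s x) y = cnj c * cinner x y"
  by (simp add: cinner_def sum_distrib_left mult_ac)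

lemma cinner_scale_right: "cinner x (c *s y) = c * cinner x y"
  by (simp add: cinner_def sum_distrib_left mult_ac)

lemma cnj_cinner: "cnj (cinner x y) = cinner y x"
  by (simp add: cinner_def mult_ac)

lemma cinner_axis_left [simp]: "cinner (axis i 1) x = x $ i"
proof -
  have "cinner (axis i 1) x = (\<Sum>k\<in>UNIV. if k = i then x $ k else 0)"
    unfolding cinner_def axis_def by (rule sum.cong) auto
  then show ?thesis by simp
qed

lemma cinner_self: "cinner x x = of_real ((norm x)\<^sup>2)"
proof -
  have "(norm x)\<^sup>2 = (\<Sum>i\<in>UNIV. (cmod (x $ i))\<^sup>2)"
    by (simp add: norm_vec_def L2_set_def sum_nonneg)
  then have "of_real ((norm x)\<^sup>2) = (\<Sum>i\<in>UNIV. complex_of_real ((cmod (x $ i))\<^sup>2))"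
    by simp
  also have "\<dots> = cinner x x"
    unfolding cinner_def complex_norm_square by (simp add: mult_ac)
  finally show ?thesis by simp
qed

lemma cinner_self_eq_0_iff [simp]: "cinner x x = 0 \<longleftrightarrow> x = 0"
  by (simp add: cinner_self)

lemma adj_mat_1 [simp]: "adj (mat 1) = (mat 1 :: complex^'n^'n)"
  by (simp add: adj_def mat_def vec_eq_iff)

lemma adj_matrix_mult: "adj (A ** B) = adj B ** adj A"
  by (simp add: adj_def matrix_matrix_mult_def vec_eq_iff mult_ac)

lemma cinner_matrix_vector_mult_right: "cinner x (A *v y) = cinner (adj A *v x) y"
  unfolding cinner_def adj_def matrix_vector_mult_def
  by (simp add: sum_distrib_left sum_distrib_right mult_ac; rule sum.swap)

lemma unitary_mat_1 [simp]: "unitary (mat 1)"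
  by (simp add: unitary_def)

lemma unitary_matrix_mult:
  assumes "unitary A" "unitary B"
  shows "unitary (A ** B)"
proof -
  have "A ** B ** adj (A ** B) = A ** (B ** adj B) ** adj A"
   and "adj (A ** B) ** (A ** B) = adj B ** (adj A ** A) ** B"
    by (simp_all add: adj_matrix_mult matrix_mul_assoc)
  with assms show ?thesis by (simp add: unitary_def)
qed

lemma cinner_unitary: "unitary M \<Longrightarrow> cinner (M *v x) (M *v y) = cinner x y"
  by (simp add: cinner_matrix_vector_mult_right matrix_vector_mul_assoc unitary_def)

definition rank_one_update :: "complex \<Rightarrow> complex^'n \<Rightarrow> complex^'n^'n" where
  "rank_one_update c w = mat 1 - smult_mat c (proj w)"

lemma proj_mulv: "proj w *v v = cinner w v *s w"
  by (simp add: proj_def matrix_vector_mult_def cinner_def vec_eq_iff sum_distrib_left mult_ac)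

lemma smult_mat_mulv: "smult_mat c X *v v = c *s (X *v v)"
  by (simp add: smult_mat_def matrix_vector_mult_def vec_eq_iff sum_distrib_left mult_ac)

lemma rank_one_update_mulv: "rank_one_update c w *v v = v - (c * cinner w v) *s w"
  by (simp add: rank_one_update_def matrix_vector_mult_diff_rdistrib smult_mat_mulv proj_mulv)

lemma adj_rank_one_update: "adj (rank_one_update c w) = rank_one_update (cnj c) w"
  by (simp add: rank_one_update_def adj_def smult_mat_def proj_def mat_def vec_eq_iff mult_ac)

lemma rank_one_update_mult_inverse:
  assumes "c + d = c * d * cinner w w"
  shows "rank_one_update d w ** rank_one_update c w = mat 1"
proof -
  have "rank_one_update d w *v (rank_one_update c w *v v) = v" for v
  proof -
    have "rank_one_update d w *v (rank_one_update c w *v v) =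
        v - (cinner w v * (c + d - c * d * cinner w w)) *s w"
      by (simp add: rank_one_update_mulv cinner_diff_right cinner_scale_right algebra_simps)
    with assms show ?thesis by simp
  qed
  then show ?thesis by (simp add: matrix_eq matrix_vector_mul_assoc[symmetric])
qed

lemma unitary_rank_one_update:
  assumes "c + cnj c = c * cnj c * cinner w w"
  shows "unitary (rank_one_update c w)"
  unfolding unitary_def adj_rank_one_update
  using rank_one_update_mult_inverse[of c "cnj c" w] rank_one_update_mult_inverse[of "cnj c" c w] assms
  by (simp add: mult_ac add_ac)

text \<open>The exchanging unitary is \<open>1 - |w\<rangle>\<langle>w| / \<langle>w, x\<rangle>\<close> with \<open>w = x - y\<close>.\<close>
lemma unitary_exchange:
  fixes x y :: "complex^'n"
  assumes "cinner x x = cinner y y"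
  obtains N where "unitary N" "N *v x = y" "\<And>z. cinner (x - y) z = 0 \<Longrightarrow> N *v z = z"
proof (cases "x = y")
  case True
  then show ?thesis by (intro that[of "mat 1"]) simp_all
next
  case False
  define w where "w = x - y"
  define s where "s = cinner w x"
  have cnj_s: "cnj s = cinner x w"
    by (simp add: s_def cnj_cinner)
  have ww: "cinner w w = s + cnj s"
    using assms unfolding cnj_s s_def w_def
    by (simp add: cinner_diff_left cinner_diff_right cnj_cinner[of y x, symmetric] cnj_cinner[of y y])
  have "s \<noteq> 0"
    using False ww by (auto simp: w_def)
  then have "unitary (rank_one_update (1 / s) w)"
    by (intro unitary_rank_one_update) (simp add: ww field_simps)
  moreover have "rank_one_update (1 / s) w *v x = y"
    using \<open>s \<noteq> 0\<close> by (simp add: rank_one_update_mulv s_def[symmetric]) (simp add: w_def)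
  moreover have "rank_one_update (1 / s) w *v z = z" if "cinner (x - y) z = 0" for z
    using that by (simp add: rank_one_update_mulv w_def)
  ultimately show ?thesis by (rule that)
qed

lemma unitary_map_of_equal_gram:
  fixes \<phi> \<theta> :: "'i::finite \<Rightarrow> complex^'m"
  assumes "\<And>i j. cinner (\<phi> i) (\<phi> j) = cinner (\<theta> i) (\<theta> j)"
  obtains M where "unitary M" "\<And>i. M *v \<phi> i = \<theta> i"
proof -
  have "\<exists>M. unitary M \<and> (\<forall>i\<in>F. M *v \<phi> i = \<theta> i)" if "finite F" for F :: "'i set"
    using that
  proof (induction F rule: finite_induct)
    case empty
    show ?case by (intro exI[of _ "mat 1"]) simp
  next
    case (insert i0 F)
    then obtain M where M: "unitary M" "\<forall>i\<in>F. M *v \<phi> i = \<theta> i" by blast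
    define x where "x = M *v \<phi> i0"
    have "cinner x x = cinner (\<theta> i0) (\<theta> i0)"
      using cinner_unitary[OF M(1)] assms by (simp add: x_def)
    then obtain N where N: "unitary N" "N *v x = \<theta> i0"
        "\<And>z. cinner (x - \<theta> i0) z = 0 \<Longrightarrow> N *v z = z"
      using unitary_exchange by blast
    have "(N ** M) *v \<phi> i = \<theta> i" if "i \<in> insert i0 F" for i
    proof (cases "i = i0")
      case True
      then show ?thesis using N by (simp add: matrix_vector_mul_assoc[symmetric] x_def)
    next
      case False
      with that have "i \<in> F" by simp
      \<comment> \<open>x - \<theta> i0 is orthogonal to \<theta> i, since M is already isometric on the family\<close>
      then have "cinner (x - \<theta> i0) (\<theta> i) = 0"
        using cinner_unitary[OF M(1), of "\<phi> i0" "\<phi> i"] assms[of i0 i] M(2)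
        by (simp add: cinner_diff_left x_def)
      then show ?thesis
        using N M(2) \<open>i \<in> F\<close> by (simp add: matrix_vector_mul_assoc[symmetric])
    qed
    then show ?case using unitary_matrix_mult[OF N(1) M(1)] by blast
  qed
  from this[of UNIV] that show ?thesis by auto
qed

lemma proj_0 [simp]: "proj 0 = 0"
  by (simp add: proj_def vec_eq_iff)

lemma matrix_mult_adj_eq_sum_proj: "A ** adj A = (\<Sum>k\<in>UNIV. proj (column k A))"
  by (simp add: matrix_matrix_mult_def adj_def proj_def column_def vec_eq_iff)

lemma matrix_vector_mult_axis [simp]: "(M *v axis j 1) $ i = M $ i $ j"
  by (simp add: matrix_vector_mult_def axis_def if_distrib cong: if_cong)

lemma psd_iff_cinner: "psd M \<longleftrightarrow> (\<forall>v. Im (cinner v (M *v v)) = 0 \<and> 0 \<le> Re (cinner v (M *v v)))"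
  by (simp add: psd_def cinner_def)

lemma matrix_eq_0_if_cinner_form_eq_0:
  fixes B :: "complex^'n^'n"
  assumes "\<And>v. cinner v (B *v v) = 0"
  shows "B = 0"
proof -
  have polar: "cinner x (B *v y) + cinner y (B *v x) = 0" for x y
    using assms[of "x + y"] assms[of x] assms[of y]
    by (simp add: cinner_add_left cinner_add_right matrix_vector_right_distrib add.commute)
  have "cinner x (B *v y) = 0" for x y
    using polar[of x y] polar[of "\<i> *s x" y]
    by (simp add: cinner_scale_left cinner_scale_right vector_scalar_commute algebra_simps)
  then have "B *v y = 0" for y
    using cinner_self_eq_0_iff by blast
  then show ?thesis by (simp add: matrix_eq)
qed

lemma adj_psd:
  assumes "psd M"
  shows "adj M = M"
proof -
  have "cinner v ((M - adj M) *v v) = 0" for v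
  proof -
    have "cnj (cinner v (M *v v)) = cinner v (M *v v)"
      using assms by (simp add: psd_iff_cinner complex_eq_iff)
    moreover have "cnj (cinner v (M *v v)) = cinner v (adj M *v v)"
      by (simp add: cinner_matrix_vector_mult_right cnj_cinner)
    ultimately show ?thesis
      by (simp add: matrix_vector_mult_diff_rdistrib cinner_diff_right)
  qed
  then show ?thesis
    using matrix_eq_0_if_cinner_form_eq_0[of "M - adj M"] by simp
qed

lemma psd_diagonal:
  assumes "psd M"
  shows "M $ i $ i = of_real (Re (M $ i $ i))" and "0 \<le> Re (M $ i $ i)"
  using assms[unfolded psd_iff_cinner, rule_format, of "axis i 1"]
  by (simp_all add: complex_eq_iff)

lemma quadratic_nonneg_imp_bound:
  fixes q a r :: real
  assumes nonneg: "\<And>s. 0 \<le> q - 2 * s * a + s\<^sup>2 * a * r" and "a \<ge> 0" "r \<ge> 0"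
  shows "a \<le> r * q"
proof (cases "a = 0")
  case True
  then show ?thesis using nonneg[of 0] \<open>r \<ge> 0\<close> by simp
next
  case False
  show ?thesis
  proof (cases "r = 0")
    case True
    have "0 \<le> q - 2 * ((q + 1) / (2 * a)) * a"
      using nonneg[of "(q + 1) / (2 * a)"] True by simp
    then show ?thesis using False by (simp add: field_simps)
  next
    case False
    have "0 \<le> q - 2 * (1 / r) * a + (1 / r)\<^sup>2 * a * r" by (rule nonneg)
    then show ?thesis
      using False \<open>r \<ge> 0\<close> by (simp add: field_simps power2_eq_square)
  qed
qed

lemma psd_cauchy_schwarz:
  assumes "psd M"
  shows "(cmod ((M *v v) $ i))\<^sup>2 \<le> Re (M $ i $ i) * Re (cinner v (M *v v))"
proof -
  define a where "a = (M *v v) $ i"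
  define r where "r = Re (M $ i $ i)"
  have Mii: "M $ i $ i = of_real r" and "r \<ge> 0"
    using psd_diagonal[OF assms] by (simp_all add: r_def)
  have cinner_v_col: "cinner v (M *v axis i 1) = cnj a"
    using cinner_matrix_vector_mult_right[of v M "axis i 1"] adj_psd[OF assms]
      cnj_cinner[of "axis i 1" "M *v v"]
    by (simp add: a_def)
  have "0 \<le> Re (cinner v (M *v v)) - 2 * s * (cmod a)\<^sup>2 + s\<^sup>2 * (cmod a)\<^sup>2 * r" for s :: real
  proof -
    define t where "t = of_real s * a"
    have "cinner (v - t *s axis i 1) (M *v (v - t *s axis i 1)) =
        cinner v (M *v v) - t * cnj a - cnj t * a + cnj t * t * of_real r"
      unfolding matrix_vector_mult_diff_distrib vector_scalar_commute cinner_diff_left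
        cinner_diff_right cinner_scale_left cinner_scale_right cinner_v_col
      by (simp add: Mii a_def[symmetric] algebra_simps)
    also have "\<dots> = cinner v (M *v v) - (2 * of_real s * (a * cnj a) - (of_real s)\<^sup>2 * (a * cnj a) * of_real r)"
      by (simp add: t_def power2_eq_square algebra_simps)
    also have "\<dots> = cinner v (M *v v) - of_real (2 * s * (cmod a)\<^sup>2 - s\<^sup>2 * (cmod a)\<^sup>2 * r)"
      by (simp add: complex_norm_square[symmetric])
    finally have "Re (cinner (v - t *s axis i 1) (M *v (v - t *s axis i 1))) =
        Re (cinner v (M *v v)) - (2 * s * (cmod a)\<^sup>2 - s\<^sup>2 * (cmod a)\<^sup>2 * r)"
      by simp
    moreover have "0 \<le> Re (cinner (v - t *s axis i 1) (M *v (v - t *s axis i 1)))"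
      using assms by (simp add: psd_iff_cinner)
    ultimately show ?thesis by simp
  qed
  from quadratic_nonneg_imp_bound[OF this] \<open>r \<ge> 0\<close> show ?thesis
    by (simp add: a_def r_def mult_ac)
qed

lemma psd_pivot_elimination:
  fixes M :: "complex^'n^'n" and i0 :: 'n
  assumes psd: "psd M"
  defines "c \<equiv> (1 / of_real (sqrt (Re (M $ i0 $ i0)))) *s column i0 M"
  \<comment> \<open>for a zero pivot, division by zero gives \<open>c = 0\<close>; this is right, as row \<open>i0\<close> of M then vanishes\<close>
  shows "psd (M - proj c)" and "(M - proj c) $ i0 $ j = 0" and "(M - proj c) $ j $ i0 = 0"
proof -
  define r where "r = Re (M $ i0 $ i0)"
  have Mii: "M $ i0 $ i0 = of_real r" and "r \<ge> 0"
    using psd_diagonal[OF psd] by (simp_all add: r_def)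
  have herm: "M $ j $ i = cnj (M $ i $ j)" for i j
    using arg_cong[OF adj_psd[OF psd], of "\<lambda>X. X $ j $ i"] by (simp add: adj_def)
  have c_nth: "c $ i = M $ i $ i0 / of_real (sqrt r)" for i
    by (simp add: c_def r_def column_def)
  have "cinner (column i0 M) v = (M *v v) $ i0" for v
  proof -
    have "column i0 M = adj M *v axis i0 1"
      by (simp add: adj_psd[OF psd] column_def vec_eq_iff)
    then show ?thesis
      using cinner_matrix_vector_mult_right[of "axis i0 1" M v] by simp
  qed
  then have cinner_c: "cinner c v = (M *v v) $ i0 / of_real (sqrt r)" for v
    by (simp add: c_def r_def cinner_scale_left)
  show "psd (M - proj c)"
    unfolding psd_iff_cinner
  proof
    fix v
    define a where "a = (M *v v) $ i0"
    have "cinner v ((M - proj c) *v v) = cinner v (M *v v) - cinner c v * cnj (cinner c v)"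
      by (simp add: matrix_vector_mult_diff_rdistrib cinner_diff_right proj_mulv
          cinner_scale_right cnj_cinner)
    also have "cinner c v * cnj (cinner c v) = of_real ((cmod (cinner c v))\<^sup>2)"
      by (rule complex_norm_square[symmetric])
    also have "(cmod (cinner c v))\<^sup>2 = (cmod a)\<^sup>2 / r"
      using \<open>r \<ge> 0\<close> by (simp add: cinner_c a_def norm_divide power_divide)
    finally have eq: "cinner v ((M - proj c) *v v) = cinner v (M *v v) - of_real ((cmod a)\<^sup>2 / r)" .
    have "(cmod a)\<^sup>2 \<le> r * Re (cinner v (M *v v))"
      using psd_cauchy_schwarz[OF psd, of v i0] by (simp add: a_def r_def)
    then have "(cmod a)\<^sup>2 / r \<le> Re (cinner v (M *v v))"
      using psd \<open>r \<ge> 0\<close> by (cases "r = 0") (auto simp: psd_iff_cinner field_simps)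
    then show "Im (cinner v ((M - proj c) *v v)) = 0 \<and> 0 \<le> Re (cinner v ((M - proj c) *v v))"
      using eq psd by (simp add: psd_iff_cinner)
  qed
  show row: "(M - proj c) $ i0 $ j = 0" for j
  proof (cases "r = 0")
    case True
    then have "(cmod (M $ i0 $ j))\<^sup>2 \<le> 0"
      using psd_cauchy_schwarz[OF psd, of "axis j 1" i0] by (simp add: r_def)
    with True show ?thesis by (simp add: proj_def c_nth)
  next
    case False
    have "of_real (sqrt r) * of_real (sqrt r) = (of_real r :: complex)"
      using \<open>r \<ge> 0\<close> by (simp flip: of_real_mult)
    with False show ?thesis
      by (simp add: proj_def c_nth Mii herm[of i0 j] field_simps)
  qed
  show "(M - proj c) $ j $ i0 = 0"
    using arg_cong[OF adj_psd[OF \<open>psd (M - proj c)\<close>], of "\<lambda>X. X $ j $ i0"] row[of j]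
    by (simp add: adj_def)
qed

text \<open>Cholesky-type factorisation, by induction on a set containing the support of M:
  each step removes one pivot row and column with the rank-one matrix of
  psd_pivot_elimination, which becomes the next column of the factor.\<close>
lemma psd_factorization_supported:
  fixes M :: "complex^'n^'n"
  assumes "finite F" "psd M" "\<And>i j. i \<notin> F \<or> j \<notin> F \<Longrightarrow> M $ i $ j = 0"
  shows "\<exists>A. A ** adj A = M \<and> (\<forall>i k. k \<notin> F \<longrightarrow> A $ i $ k = 0)"
  using assms
proof (induction F arbitrary: M rule: finite_induct)
  case empty
  then have "M = 0" by (simp add: vec_eq_iff)
  then show ?case by (intro exI[of _ 0]) simp
next
  case (insert i0 F M)
  define c where "c = (1 / of_real (sqrt (Re (M $ i0 $ i0)))) *s column i0 M"
  note elim = psd_pivot_elimination[OF insert.prems(1), of i0, folded c_def]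
  have "(M - proj c) $ i $ j = 0" if "i \<notin> F \<or> j \<notin> F" for i j
  proof (cases "i = i0 \<or> j = i0")
    case True
    then show ?thesis using elim(2,3) by auto
  next
    case False
    with that have "i \<notin> insert i0 F \<or> j \<notin> insert i0 F" by auto
    then have "M $ i $ j = 0" and "c $ i = 0 \<or> c $ j = 0"
      using insert.prems(2) by (auto simp: c_def column_def)
    then show ?thesis by (auto simp: proj_def)
  qed
  then obtain A' where A': "A' ** adj A' = M - proj c" "\<forall>i k. k \<notin> F \<longrightarrow> A' $ i $ k = 0"
    using insert.IH[OF elim(1)] by blast
  define A where "A = (\<chi> i k. if k = i0 then c $ i else A' $ i $ k)"
  have "column i0 A' = 0"
    using A'(2) insert.hyps(2) by (simp add: column_def vec_eq_iff)
  have "A ** adj A = proj c + (\<Sum>k\<in>UNIV - {i0}. proj (column k A))"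
    by (simp add: matrix_mult_adj_eq_sum_proj sum.remove[of UNIV i0] A_def column_def)
  also have "(\<Sum>k\<in>UNIV - {i0}. proj (column k A)) = (\<Sum>k\<in>UNIV - {i0}. proj (column k A'))"
    by (rule sum.cong) (auto simp: A_def column_def)
  also have "\<dots> = A' ** adj A'"
    using \<open>column i0 A' = 0\<close> by (simp add: matrix_mult_adj_eq_sum_proj sum.remove[of UNIV i0])
  finally have "A ** adj A = M"
    using A'(1) by simp
  moreover have "\<forall>i k. k \<notin> insert i0 F \<longrightarrow> A $ i $ k = 0"
    using A'(2) by (simp add: A_def)
  ultimately show ?case by blast
qed

lemma psd_factorization:
  fixes M :: "complex^'n^'n"
  assumes "psd M"
  obtains A :: "complex^'n^'n" where "A ** adj A = M"
  using psd_factorization_supported[of UNIV M] assms by (auto intro: that)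

definition vec_of_mat :: "complex^'b::finite^'a::finite \<Rightarrow> complex^('a \<times> 'b)" where
  "vec_of_mat A = (\<chi> p. A $ fst p $ snd p)"

text \<open>For \<open>y = \<Sum>\<^sub>i e\<^sub>i \<otimes> y\<^sub>i\<close> in \<open>(H\<^sub>s \<otimes> H\<^sub>a) \<otimes> H\<^sub>u\<close>, \<open>slice_s y i = y\<^sub>i\<close>;
  \<open>slice_a\<close> splits off the \<open>H\<^sub>a\<close> factor in the same way.\<close>
definition slice_s :: "complex^(('s::finite \<times> 'a::finite) \<times> 'u::finite) \<Rightarrow> 's \<Rightarrow> complex^('a \<times> 'u)" where
  "slice_s y i = (\<chi> q. y $ ((i, fst q), snd q))"

definition slice_a :: "complex^(('s::finite \<times> 'a::finite) \<times> 'u::finite) \<Rightarrow> 'a \<Rightarrow> complex^('s \<times> 'u)" where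
  "slice_a y b = (\<chi> q. y $ ((fst q, b), snd q))"

lemma sum_UNIV_prod:
  "(\<Sum>p\<in>(UNIV :: ('a::finite \<times> 'b::finite) set). f p) = (\<Sum>x\<in>UNIV. \<Sum>y\<in>UNIV. f (x, y))"
  by (simp only: sum.cartesian_product UNIV_Times_UNIV case_prod_eta)

lemma vec_eq_iff_slice_s: "y = z \<longleftrightarrow> (\<forall>i. slice_s y i = slice_s z i)"
  by (auto simp: slice_s_def vec_eq_iff)

lemma slice_s_V_ext: "slice_s (V_ext V *v y) i = V *v slice_s y i"
proof -
  have delta: "(\<Sum>s\<in>UNIV. \<Sum>a\<in>UNIV. \<Sum>u\<in>UNIV. (if i = s then 1 else 0) * f s a u) =
      (\<Sum>a\<in>UNIV. \<Sum>u\<in>UNIV. f i a u)" for f :: "_ \<Rightarrow> _ \<Rightarrow> _ \<Rightarrow> complex"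
  proof -
    have "(\<Sum>s\<in>UNIV. \<Sum>a\<in>UNIV. \<Sum>u\<in>UNIV. (if i = s then 1 else 0) * f s a u) =
        (\<Sum>s\<in>UNIV. if i = s then \<Sum>a\<in>UNIV. \<Sum>u\<in>UNIV. f s a u else 0)"
      by (rule sum.cong) auto
    then show ?thesis by simp
  qed
  have "(V_ext V *v y) $ ((i, a), u) = (V *v slice_s y i) $ (a, u)" for a u
    by (simp add: slice_s_def V_ext_def matrix_vector_mult_def sum_UNIV_prod mult.assoc delta)
  then show ?thesis
    by (simp add: slice_s_def vec_eq_iff)
qed

lemma slice_a_U_ext: "slice_a (U_ext U *v y) b = U *v slice_a y b"
proof -
  have delta: "(\<Sum>a\<in>UNIV. \<Sum>u\<in>UNIV. f a u * (if b = a then 1 else 0) * g a u) =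
      (\<Sum>u\<in>UNIV. f b u * g b u)" for f g :: "_ \<Rightarrow> _ \<Rightarrow> complex"
  proof -
    have "(\<Sum>a\<in>UNIV. \<Sum>u\<in>UNIV. f a u * (if b = a then 1 else 0) * g a u) =
        (\<Sum>a\<in>UNIV. if b = a then \<Sum>u\<in>UNIV. f a u * g a u else 0)"
      by (rule sum.cong) auto
    then show ?thesis by simp
  qed
  have "(U_ext U *v y) $ ((i, b), w) = (U *v slice_a y b) $ (i, w)" for i w
    by (simp add: slice_a_def U_ext_def matrix_vector_mult_def sum_UNIV_prod delta)
  then show ?thesis
    by (simp add: slice_a_def vec_eq_iff)
qed

lemma slice_s_vtensor_vec_of_mat: "slice_s (vtensor (vec_of_mat A) x) i = vtensor (A $ i) x"
  by (simp add: slice_s_def vtensor_def vec_of_mat_def)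

lemma slice_a_vtensor_vec_of_mat: "slice_a (vtensor (vec_of_mat A) x) b = vtensor (column b A) x"
  by (simp add: slice_a_def vtensor_def vec_of_mat_def column_def)

lemma cinner_vtensor: "cinner (vtensor x y) (vtensor x' y') = cinner x x' * cinner y y'"
  by (simp add: cinner_def vtensor_def sum_UNIV_prod sum_product mult_ac)

lemma cinner_rows: "cinner (A $ i) (A $ j) = (A ** adj A) $ j $ i"
  by (simp add: cinner_def matrix_matrix_mult_def adj_def mult.commute)

lemma cinner_vec_of_mat: "cinner (vec_of_mat A) (vec_of_mat A) = mtrace (A ** adj A)"
  by (simp add: cinner_def mtrace_def vec_of_mat_def matrix_matrix_mult_def adj_def
      sum_UNIV_prod mult.commute)

lemma ptrace2_proj_vec_of_mat: "ptrace2 (proj (vec_of_mat A)) = A ** adj A"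
  by (simp add: ptrace2_def proj_def vec_of_mat_def matrix_matrix_mult_def adj_def vec_eq_iff)

lemma cinner_slice_s:
  "cinner (slice_s y i) (slice_s y j) = (\<Sum>b\<in>UNIV. ptrace2 (proj (slice_a y b)) $ j $ i)"
  by (simp add: cinner_def slice_s_def slice_a_def ptrace2_def proj_def sum_UNIV_prod mult.commute)

lemma proj_matrix_vector_mult: "proj (M *v x) = M ** proj x ** adj M"
  by (simp add: proj_def matrix_matrix_mult_def matrix_vector_mult_def adj_def vec_eq_iff
      sum_distrib_left sum_distrib_right mult_ac)

lemma kron_proj_proj: "kron (proj x) (proj y) = proj (vtensor x y)"
  by (simp add: kron_def proj_def vtensor_def vec_eq_iff mult_ac)

lemma transop_proj: "transop U chi (proj x) = ptrace2 (proj (U *v vtensor x chi))"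
  by (simp add: transop_def kron_proj_proj proj_matrix_vector_mult)

lemma transop_sum: "transop U chi (\<Sum>k\<in>S. X k) = (\<Sum>k\<in>S. transop U chi (X k))"
proof -
  have "transop U chi (X + Y) = transop U chi X + transop U chi Y" for X Y
    by (simp add: transop_def ptrace2_def kron_def matrix_matrix_mult_def vec_eq_iff
        distrib_left distrib_right sum.distrib)
  moreover have "transop U chi 0 = 0"
    by (simp add: transop_def ptrace2_def kron_def vec_eq_iff matrix_matrix_mult_def)
  ultimately show ?thesis
    using sum_comp_morphism[of "transop U chi" X S] by (simp add: comp_def)
qed

lemma cinner_slice_s_U_ext_vtensor:
  "cinner (slice_s (U_ext U *v vtensor (vec_of_mat A) chi) i)
          (slice_s (U_ext U *v vtensor (vec_of_mat A) chi) j) = transop U chi (A ** adj A) $ j $ i"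
  by (simp add: cinner_slice_s slice_a_U_ext slice_a_vtensor_vec_of_mat transop_proj
      matrix_mult_adj_eq_sum_proj transop_sum)

theorem mainTheorem1:
  fixes U :: "complex^('s::finite \<times> 'u::finite)^('s \<times> 'u)"
    and chi :: "complex^'u"
    and \<rho>ss :: "complex^'s^'s"
  assumes "norm chi = 1"
    and "unitary U"
    and "primitive (transop U chi)"
    and "density_op \<rho>ss" and "transop U chi \<rho>ss = \<rho>ss"
  shows "\<exists>(\<psi>::complex^('s \<times> 's)) (V::complex^('s \<times> 'u)^('s \<times> 'u)).
           norm \<psi> = 1 \<and> ptrace2 (proj \<psi>) = \<rho>ss \<and> unitary V \<and>
           (V_ext V ** U_ext U) *v vtensor \<psi> chi = vtensor \<psi> chi"
proof -
  obtain A :: "complex^'s^'s" where A: "A ** adj A = \<rho>ss"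
    using assms(4) psd_factorization by (auto simp: density_op_def)
  define \<psi> where "\<psi> = vec_of_mat A"
  have "cinner \<psi> \<psi> = 1"
    using assms(4) A by (simp add: \<psi>_def cinner_vec_of_mat density_op_def)
  then have "(norm \<psi>)\<^sup>2 = 1"
    by (metis cinner_self of_real_eq_1_iff)
  then have "norm \<psi> = 1"
    using norm_ge_zero[of \<psi>] by (auto simp: power2_eq_1_iff)
  define \<phi> where "\<phi> i = slice_s (U_ext U *v vtensor \<psi> chi) i" for i
  have gram: "cinner (\<phi> i) (\<phi> j) = cinner (slice_s (vtensor \<psi> chi) i) (slice_s (vtensor \<psi> chi) j)" for i j
    using A assms(1,5)
    by (simp add: \<phi>_def \<psi>_def cinner_slice_s_U_ext_vtensor slice_s_vtensor_vec_of_mat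
        cinner_vtensor cinner_rows cinner_self)
  obtain V where "unitary V" and V: "\<And>i. V *v \<phi> i = slice_s (vtensor \<psi> chi) i"
    using unitary_map_of_equal_gram[of \<phi> "slice_s (vtensor \<psi> chi)"] gram by blast
  have "(V_ext V ** U_ext U) *v vtensor \<psi> chi = vtensor \<psi> chi"
    by (simp add: vec_eq_iff_slice_s matrix_vector_mul_assoc[symmetric] slice_s_V_ext
        V[unfolded \<phi>_def])
  moreover have "ptrace2 (proj \<psi>) = \<rho>ss"
    using A by (simp add: \<psi>_def ptrace2_proj_vec_of_mat)
  ultimately show ?thesis
    using \<open>norm \<psi> = 1\<close> \<open>unitary V\<close> by blast
qed

end
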